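(* For $p,q>0$, $x\ge0$ and $0\le y<1$, with $z=\tfrac12xy$, the series below converge and $$B_{p,q}(x,y)=\frac{e^{-x/2}y^p(1-y)^q}{pB(p,q)}\sum_{j=0}^\infty y^j\frac{(p+q)_j}{(p+1)_j}M(p+q+j,p+1+j,z) =\frac{e^{x(y-1)/2}y^p(1-y)^q}{pB(p,q)}\sum_{j=0}^\infty y^j\frac{(p+q)_j}{(p+1)_j}M(1-q,p+1+j,-z).$$ Equivalently, $B_{p,q}(x,y)=\frac{e^{-x/2}y^p(1-y)^q}{pB(p,q)}\sum_{j=0}^\infty y^j\,\frac{d^j}{dz^j}M(p+q,p+1,z)$.
   Context: For $p,q>0$ and $0\le y\le 1$, $I_y(p,q)=\frac{1}{B(p,q)}\int_0^y t^{p-1}(1-t)^{q-1}\,dt$ is the regularized incomplete beta function, with $B(p,q)=\Gamma(p)\Gamma(q)/\Gamma(p+q)$. The cumulative noncentral beta distribution is $B_{p,q}(x,y)=e^{-x/2}\sum_{j=0}^\infty \frac{1}{j!}\left(\frac x2\right)^j I_y(p+j,q)$ for $x\ge0$. $M(a,b,z)=\sum_{n\ge0}\frac{(a)_n}{(b)_n}\frac{z^n}{n!}$ is Kummer's confluent hypergeometric function, and $(a)_n$ is the Pochhammer symbol. *)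

theory Defs
  imports "HOL-Analysis.Analysis"
begin

definition inc_beta :: "real \<Rightarrow> real \<Rightarrow> real \<Rightarrow> real" where
  "inc_beta y p q = integral {0..y} (\<lambda>t. t powr (p - 1) * (1 - t) powr (q - 1)) / Beta p q"

definition noncentral_beta :: "real \<Rightarrow> real \<Rightarrow> real \<Rightarrow> real \<Rightarrow> real" where
  "noncentral_beta p q x y =
     exp (- x / 2) * (\<Sum>j. (x / 2) ^ j / fact j * inc_beta y (p + real j) q)"

definition kummerM :: "real \<Rightarrow> real \<Rightarrow> real \<Rightarrow> real" where
  "kummerM a b z = (\<Sum>n. pochhammer a n / pochhammer b n * z ^ n / fact n)"

end

theory Submission
  imports Defs "HOL-Computational_Algebra.Formal_Power_Series" "HOL-Real_Asymp.Real_Asymp"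
begin

text \<open>
  The antiderivative of t^(a-1) (1-t)^(q-1) is t^a (1-t)^q S(t) / a, where
  S(t) = sum_k (a+q)_k/(a+1)_k t^k is the Gauss series 2F1(1, a+q; a+1; t): it solves
  a S - (a+q) t S + t (1-t) S' = a. Hence I_y(a,q) = y^a (1-y)^q S(y) / (a B(a,q)), and with
  a = p + j and z = x y / 2 the noncentral beta series becomes a double series with nonnegative
  terms z^j/j! (p+q)_(j+k)/(p+1)_(j+k) y^k. Summing over j first produces the Kummer functions
  M(p+q+k, p+1+k, z). Kummer's transformation M(a,b,z) = e^z M(b-a,b,-z) gives the second form,
  and d^j/dz^j M(a,b,z) = (a)_j/(b)_j M(a+j,b+j,z) the third.
\<close>

definition kummer_coeff :: "real \<Rightarrow> real \<Rightarrow> nat \<Rightarrow> real" where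
  "kummer_coeff a b n = pochhammer a n / pochhammer b n / fact n"

lemma kummerM_eq_suminf: "kummerM a b z = (\<Sum>n. kummer_coeff a b n * z ^ n)"
  unfolding kummerM_def kummer_coeff_def by (simp add: field_simps)

lemma kummer_coeff_Suc:
  assumes "b > 0"
  shows "kummer_coeff a b (Suc n) = kummer_coeff a b n * (a + n) / ((b + n) * (n + 1))"
proof -
  have "pochhammer b n > 0" using assms by (intro pochhammer_pos) auto
  with assms show ?thesis unfolding kummer_coeff_def by (simp add: pochhammer_Suc field_simps)
qed

lemma summable_norm_kummer_coeff:
  assumes b: "b > 0"
  shows "summable (\<lambda>n. norm (kummer_coeff a b n * z ^ n))"
proof -
  define C where "C = \<bar>a\<bar> / b + 1"
  show ?thesis
  proof (rule summable_ratio_test[where c = "1/2" and N = "nat \<lceil>2 * C * \<bar>z\<bar>\<rceil>"])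
    fix n assume "n \<ge> nat \<lceil>2 * C * \<bar>z\<bar>\<rceil>"
    then have n: "2 * C * \<bar>z\<bar> \<le> n + 1" by linarith
    have "0 \<le> \<bar>a\<bar> / b * n" using b by simp
    then have "\<bar>a + n\<bar> \<le> \<bar>a\<bar> + \<bar>a\<bar> / b * n + b + n" using b by linarith
    also have "\<dots> = C * (b + n)" using b unfolding C_def by (simp add: field_simps)
    finally have "\<bar>a + n\<bar> * \<bar>z\<bar> \<le> C * \<bar>z\<bar> * (b + n)"
      by (metis mult_right_mono abs_ge_zero mult.assoc mult.commute)
    also have "\<dots> \<le> (n + 1) / 2 * (b + n)" using n b by (intro mult_right_mono) auto
    finally have bound: "\<bar>a + n\<bar> * \<bar>z\<bar> \<le> (b + n) * (n + 1) / 2" by (simp add: mult_ac)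
    have "(b + n) * (n + 1) > 0" using b by simp
    then have "\<bar>(a + n) / ((b + n) * (n + 1)) * z\<bar> = \<bar>a + n\<bar> * \<bar>z\<bar> / ((b + n) * (n + 1))"
      using b by (simp add: abs_mult)
    also have "\<dots> \<le> 1 / 2" using bound \<open>(b + n) * (n + 1) > 0\<close> by (simp add: divide_le_eq)
    finally have ratio: "\<bar>(a + n) / ((b + n) * (n + 1)) * z\<bar> \<le> 1 / 2" .
    have "kummer_coeff a b (Suc n) * z ^ Suc n =
        kummer_coeff a b n * z ^ n * ((a + n) / ((b + n) * (n + 1)) * z)"
      unfolding kummer_coeff_Suc[OF b] by simp
    then have "norm (kummer_coeff a b (Suc n) * z ^ Suc n) =
        norm (kummer_coeff a b n * z ^ n) * \<bar>(a + n) / ((b + n) * (n + 1)) * z\<bar>"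
      by (simp only: real_norm_def abs_mult)
    also have "\<dots> \<le> norm (kummer_coeff a b n * z ^ n) * (1 / 2)"
      using ratio by (rule mult_left_mono) simp
    finally show "norm (norm (kummer_coeff a b (Suc n) * z ^ Suc n)) \<le>
        1/2 * norm (norm (kummer_coeff a b n * z ^ n))" by simp
  qed simp
qed

lemma summable_kummer_coeff: "b > 0 \<Longrightarrow> summable (\<lambda>n. kummer_coeff a b n * z ^ n)"
  by (rule summable_norm_cancel[OF summable_norm_kummer_coeff])

lemma diffs_kummer_coeff:
  assumes "b > 0"
  shows "diffs (kummer_coeff a b) = (\<lambda>n. a / b * kummer_coeff (a + 1) (b + 1) n)"
proof
  fix n
  have "pochhammer (b + 1) n > 0" using assms by (intro pochhammer_pos) auto
  with assms show "diffs (kummer_coeff a b) n = a / b * kummer_coeff (a + 1) (b + 1) n"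
    unfolding diffs_def kummer_coeff_def by (simp add: pochhammer_rec field_simps del: of_nat_Suc)
qed

lemma kummerM_has_field_derivative:
  assumes "b > 0"
  shows "(kummerM a b has_field_derivative a / b * kummerM (a + 1) (b + 1) w) (at w)"
proof -
  have "((\<lambda>w. \<Sum>n. kummer_coeff a b n * w ^ n) has_field_derivative
          (\<Sum>n. diffs (kummer_coeff a b) n * w ^ n)) (at w)"
    by (rule termdiffs_strong_converges_everywhere, rule summable_kummer_coeff[OF assms])
  also have "(\<Sum>n. diffs (kummer_coeff a b) n * w ^ n) = a / b * kummerM (a + 1) (b + 1) w"
    unfolding diffs_kummer_coeff[OF assms] kummerM_eq_suminf
    using suminf_mult[OF summable_kummer_coeff[of "b + 1" "a + 1" w], of "a / b"] assms
    by (simp add: mult.assoc)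
  finally show ?thesis unfolding kummerM_eq_suminf[abs_def] .
qed

lemma higher_deriv_kummerM:
  assumes "b > 0"
  shows "(deriv ^^ j) (kummerM a b) =
           (\<lambda>w. pochhammer a j / pochhammer b j * kummerM (a + j) (b + j) w)"
proof (induction j)
  case (Suc j)
  have "b + j > 0" and "pochhammer b j > 0" using assms by (auto intro: pochhammer_pos)
  show ?case
  proof
    fix w
    have "((\<lambda>w. pochhammer a j / pochhammer b j * kummerM (a + j) (b + j) w) has_field_derivative
           pochhammer a j / pochhammer b j * ((a + j) / (b + j) * kummerM (a + j + 1) (b + j + 1) w))
         (at w)"
      using \<open>b + j > 0\<close> by (intro DERIV_cmult kummerM_has_field_derivative)
    then show "(deriv ^^ Suc j) (kummerM a b) w =
        pochhammer a (Suc j) / pochhammer b (Suc j) * kummerM (a + Suc j) (b + Suc j) w"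
      using Suc.IH \<open>b + j > 0\<close> \<open>pochhammer b j > 0\<close>
      by (simp add: DERIV_imp_deriv pochhammer_Suc field_simps)
  qed
qed simp

lemma pochhammer_minus_of_nat:
  assumes "k \<le> n"
  shows "pochhammer (- real n) k = (-1) ^ k * fact n / fact (n - k)"
proof -
  have "fact n = (fact (n - k) :: real) * pochhammer (1 + real (n - k)) (n - (n - k))"
    using pochhammer_product[of "n - k" n "1::real"] by (simp add: pochhammer_fact)
  then have "pochhammer (real n - real k + 1) k = fact n / (fact (n - k) :: real)"
    using assms by (simp add: of_nat_diff field_simps add.commute)
  then show ?thesis using pochhammer_minus[of "real n" k] by simp
qed

lemma kummerM_transform:
  assumes b: "b > 0"
  shows "kummerM a b z = exp z * kummerM (b - a) b (- z)"
proof -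
  have exp_series: "exp z = (\<Sum>n. z ^ n / fact n)"
    using exp_converges[of z] by (simp add: sums_iff divide_inverse mult.commute)
  have "summable (\<lambda>n. norm (z ^ n / fact n))"
    using summable_norm_exp[of z] by (simp add: divide_inverse mult.commute)
  then have "kummerM (b - a) b (- z) * exp z =
      (\<Sum>n. \<Sum>i\<le>n. kummer_coeff (b - a) b i * (- z) ^ i * (z ^ (n - i) / fact (n - i)))"
    unfolding exp_series kummerM_eq_suminf
    by (rule Cauchy_product[OF summable_norm_kummer_coeff[OF b]])
  also have "\<dots> = (\<Sum>n. kummer_coeff a b n * z ^ n)"
    \<comment> \<open>each Cauchy coefficient is a Chu-Vandermonde sum\<close>
  proof (rule suminf_cong)
    fix n
    have "(\<Sum>i\<le>n. kummer_coeff (b - a) b i * (- z) ^ i * (z ^ (n - i) / fact (n - i)))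
        = z ^ n / fact n * (\<Sum>i\<le>n. pochhammer (b - a) i * pochhammer (- real n) i
                                      / (fact i * pochhammer b i))"
      unfolding sum_distrib_left
    proof (rule sum.cong)
      fix i assume "i \<in> {..n}"
      then have i: "i \<le> n" by simp
      then have "z ^ n = z ^ i * z ^ (n - i)" by (simp flip: power_add)
      moreover have "pochhammer b i \<noteq> 0" using b pochhammer_pos[of b i] by simp
      ultimately show "kummer_coeff (b - a) b i * (- z) ^ i * (z ^ (n - i) / fact (n - i)) =
          z ^ n / fact n * (pochhammer (b - a) i * pochhammer (- real n) i / (fact i * pochhammer b i))"
        unfolding pochhammer_minus_of_nat[OF i] kummer_coeff_def power_minus[of z]
        by (simp add: field_simps)
    qed simp
    also have "\<dots> = z ^ n / fact n * (pochhammer a n / pochhammer b n)"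
      using Vandermonde_pochhammer[of n b "b - a"] b
      by (simp add: atLeast0AtMost of_nat_fact)
    finally show "(\<Sum>i\<le>n. kummer_coeff (b - a) b i * (- z) ^ i * (z ^ (n - i) / fact (n - i))) =
        kummer_coeff a b n * z ^ n"
      unfolding kummer_coeff_def by (simp add: field_simps)
  qed
  finally show ?thesis unfolding kummerM_eq_suminf by (simp add: mult.commute)
qed

definition incbeta_coeff :: "real \<Rightarrow> real \<Rightarrow> nat \<Rightarrow> real" where
  "incbeta_coeff a q k = pochhammer (a + q) k / pochhammer (a + 1) k"

definition incbeta_series :: "real \<Rightarrow> real \<Rightarrow> real \<Rightarrow> real" where
  "incbeta_series a q t = (\<Sum>k. incbeta_coeff a q k * t ^ k)"

lemma incbeta_coeff_pos: "a > 0 \<Longrightarrow> q > 0 \<Longrightarrow> incbeta_coeff a q k > 0"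
  unfolding incbeta_coeff_def by (auto intro!: divide_pos_pos pochhammer_pos)

lemma incbeta_coeff_Suc:
  assumes "a > 0"
  shows "incbeta_coeff a q (Suc k) * (a + 1 + k) = incbeta_coeff a q k * (a + q + k)"
proof -
  have "pochhammer (a + 1) k \<noteq> 0" and "a + 1 + k \<noteq> 0"
    using assms pochhammer_pos[of "a + 1" k] by auto
  then show ?thesis unfolding incbeta_coeff_def pochhammer_Suc
    by (simp add: ac_simps)
qed

lemma incbeta_coeff_add:
  "incbeta_coeff a q j * incbeta_coeff (a + j) q k = incbeta_coeff a q (j + k)"
  unfolding incbeta_coeff_def pochhammer_product'[of "a + q" j k] pochhammer_product'[of "a + 1" j k]
  by (simp add: add_ac)

lemma conv_radius_incbeta_coeff:
  assumes "a > 0" and "q > 0"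
  shows "conv_radius (incbeta_coeff a q) = 1"
proof (rule conv_radius_ratio_limit_nonzero[of _ 1])
  have "norm (incbeta_coeff a q k) / norm (incbeta_coeff a q (Suc k)) = (a + 1 + k) / (a + q + k)" for k
    using incbeta_coeff_Suc[OF assms(1), of q k] incbeta_coeff_pos[OF assms, of k]
          incbeta_coeff_pos[OF assms, of "Suc k"] assms
    by (simp add: field_simps)
  moreover have "(\<lambda>k. (a + 1 + real k) / (a + q + real k)) \<longlonglongrightarrow> 1" by real_asymp
  ultimately show "(\<lambda>k. norm (incbeta_coeff a q k) / norm (incbeta_coeff a q (Suc k))) \<longlonglongrightarrow> 1"
    by simp
qed simp_all

lemma summable_incbeta_series:
  assumes "a > 0" and "q > 0" and "\<bar>t\<bar> < 1"
  shows "summable (\<lambda>k. incbeta_coeff a q k * t ^ k)"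
  by (rule summable_in_conv_radius) (use assms in \<open>simp add: conv_radius_incbeta_coeff\<close>)

lemma incbeta_series_has_field_derivative:
  assumes "a > 0" and "q > 0" and "\<bar>t\<bar> < 1"
  shows "(incbeta_series a q has_field_derivative (\<Sum>k. diffs (incbeta_coeff a q) k * t ^ k)) (at t)"
  unfolding incbeta_series_def[abs_def]
  by (rule termdiffs_strong'[where K = 1]) (use assms summable_incbeta_series in auto)

lemma incbeta_series_ode:
  assumes a: "a > 0" and q: "q > 0" and t: "\<bar>t\<bar> < 1"
    and D: "(incbeta_series a q has_field_derivative D) (at t)"
  shows "a * incbeta_series a q t - (a + q) * t * incbeta_series a q t + t * (1 - t) * D = a"
proof -
  define c where "c = incbeta_coeff a q"
  define S where "S = incbeta_series a q t"
  define g where "g k = k * c k * t ^ k" for k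
  define A where "A k = (a + k) * c k * t ^ k" for k
  have S_sums: "(\<lambda>k. c k * t ^ k) sums S"
    unfolding S_def incbeta_series_def c_def using summable_incbeta_series[OF a q t] by (simp add: summable_sums)
  have "D = (\<Sum>k. diffs c k * t ^ k)"
    using DERIV_unique[OF D incbeta_series_has_field_derivative[OF a q t]] unfolding c_def .
  moreover have "summable (\<lambda>k. diffs c k * t ^ k)"
    unfolding c_def by (rule termdiff_converges[where K = 1]) (use t summable_incbeta_series[OF a q] in auto)
  ultimately have "(\<lambda>k. t * (diffs c k * t ^ k)) sums (t * D)"
    by (intro sums_mult) (simp add: summable_sums)
  moreover have "(\<lambda>k. t * (diffs c k * t ^ k)) = (\<lambda>k. g (Suc k))"
    unfolding g_def diffs_def by (auto simp: algebra_simps)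
  ultimately have "(\<lambda>k. g (Suc k)) sums (t * D)" by simp
  then have g_sums: "g sums (t * D)" by (subst (asm) sums_Suc_iff) (simp add: g_def)
  have "A = (\<lambda>k. a * (c k * t ^ k) + g k)" unfolding A_def g_def by (auto simp: algebra_simps)
  with S_sums g_sums have A_sums: "A sums (a * S + t * D)" by (simp add: sums_add sums_mult)
  have "(\<lambda>k. A (Suc k)) = (\<lambda>k. t * ((a + q) * (c k * t ^ k) + g k))"
  proof
    fix k
    have "A (Suc k) = c (Suc k) * (a + 1 + k) * t ^ Suc k" unfolding A_def by (simp add: algebra_simps)
    also have "\<dots> = c k * (a + q + k) * t ^ Suc k" unfolding c_def by (simp only: incbeta_coeff_Suc[OF a])
    finally show "A (Suc k) = t * ((a + q) * (c k * t ^ k) + g k)" unfolding g_def by (simp add: algebra_simps)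
  qed
  with S_sums g_sums have "(\<lambda>k. A (Suc k)) sums (t * ((a + q) * S + t * D))"
    by (simp add: sums_add sums_mult)
  moreover have "A 0 = a" unfolding A_def c_def incbeta_coeff_def by simp
  ultimately have "A sums (t * ((a + q) * S + t * D) + a)" by (simp add: sums_Suc_iff)
  with A_sums have "a * S + t * D = t * ((a + q) * S + t * D) + a" by (rule sums_unique2)
  then show ?thesis unfolding S_def by (simp add: algebra_simps)
qed

lemma has_integral_incbeta_series:
  assumes a: "a > 0" and q: "q > 0" and y: "0 \<le> y" "y < 1"
  shows "((\<lambda>t. t powr (a - 1) * (1 - t) powr (q - 1)) has_integral
           y powr a * (1 - y) powr q * incbeta_series a q y / a) {0..y}"
proof -
  define F where "F t = t powr a * (1 - t) powr q * incbeta_series a q t / a" for t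
  have "((\<lambda>t. t powr (a - 1) * (1 - t) powr (q - 1)) has_integral (F y - F 0)) {0..y}"
  proof (rule fundamental_theorem_of_calculus_interior[OF y(1)])
    have "continuous_on {0..y} (incbeta_series a q)"
    proof (rule continuous_at_imp_continuous_on, intro ballI)
      fix t assume "t \<in> {0..y}"
      then have "\<bar>t\<bar> < 1" using y by auto
      from DERIV_isCont[OF incbeta_series_has_field_derivative[OF a q this]]
      show "isCont (incbeta_series a q) t" .
    qed
    moreover have "continuous_on {0..y} (\<lambda>t. t powr a)"
      by (rule continuous_on_powr') (use a in \<open>auto intro: continuous_intros\<close>)
    moreover have "continuous_on {0..y} (\<lambda>t. (1 - t) powr q)"
      by (rule continuous_on_powr') (use y in \<open>auto intro: continuous_intros\<close>)
    ultimately show "continuous_on {0..y} F"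
      unfolding F_def using a by (intro continuous_on_divide continuous_on_mult continuous_on_const) auto
  next
    fix t assume "t \<in> {0<..<y}"
    then have t: "0 < t" "t < 1" "\<bar>t\<bar> < 1" using y by auto
    define S where "S = incbeta_series a q t"
    obtain D where D: "(incbeta_series a q has_field_derivative D) (at t)"
      using incbeta_series_has_field_derivative[OF a q t(3)] by blast
    have "((\<lambda>t. (1 - t) powr q) has_real_derivative q * (1 - t) powr (q - 1) * (- 1)) (at t)"
      using DERIV_fun_powr[of "\<lambda>t. 1 - t" "- 1" t q] t by (auto intro!: derivative_eq_intros)
    then have F_deriv: "(F has_real_derivative
        ((a * t powr (a - 1) * (1 - t) powr q + q * (1 - t) powr (q - 1) * (- 1) * t powr a) * S
          + D * (t powr a * (1 - t) powr q)) / a) (at t)"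
      unfolding F_def S_def by (intro DERIV_cdivide DERIV_mult has_real_derivative_powr t(1) D)
    have powr_split: "t powr a = t * t powr (a - 1)" "(1 - t) powr q = (1 - t) * (1 - t) powr (q - 1)"
      using t by (simp_all add: powr_mult_base)
    have "((a * t powr (a - 1) * (1 - t) powr q + q * (1 - t) powr (q - 1) * (- 1) * t powr a) * S
          + D * (t powr a * (1 - t) powr q)) / a =
        t powr (a - 1) * (1 - t) powr (q - 1) * (a * S - (a + q) * t * S + t * (1 - t) * D) / a"
      unfolding powr_split by (simp add: algebra_simps)
    also have "\<dots> = t powr (a - 1) * (1 - t) powr (q - 1)"
      using a unfolding S_def incbeta_series_ode[OF a q t(3) D] by simp
    finally show "(F has_vector_derivative t powr (a - 1) * (1 - t) powr (q - 1)) (at t)"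
      using F_deriv by (simp add: has_real_derivative_iff_has_vector_derivative)
  qed
  moreover have "F 0 = 0" unfolding F_def using a by simp
  ultimately show ?thesis unfolding F_def by simp
qed

lemma inc_beta_eq_incbeta_series:
  assumes "a > 0" and "q > 0" and "0 \<le> y" and "y < 1"
  shows "inc_beta y a q = y powr a * (1 - y) powr q * incbeta_series a q y / (a * Beta a q)"
  unfolding inc_beta_def using integral_unique[OF has_integral_incbeta_series[OF assms]] by simp

lemma Beta_real_pos: "a > 0 \<Longrightarrow> b > 0 \<Longrightarrow> Beta a b > (0::real)"
  unfolding Beta_def by simp

lemma inc_beta_nonneg_le_1:
  assumes "a > 0" and "q > 0" and "0 \<le> y" and "y < 1"
  shows "0 \<le> inc_beta y a q \<and> inc_beta y a q \<le> 1"
proof -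
  let ?I = "y powr a * (1 - y) powr q * incbeta_series a q y / a"
  note I = has_integral_incbeta_series[OF assms]
  have "?I \<le> Beta a q"
    by (rule has_integral_subset_le[OF _ I has_integral_Beta_real[OF assms(1,2)]]) (use assms in auto)
  moreover have "0 \<le> ?I" by (rule has_integral_nonneg[OF I]) auto
  moreover have "inc_beta y a q = ?I / Beta a q"
    unfolding inc_beta_def using integral_unique[OF I] by simp
  ultimately show ?thesis using Beta_real_pos[OF assms(1,2)]
    by (metis divide_le_eq_1_pos divide_nonneg_pos)
qed

lemma Beta_shift_incbeta_coeff:
  assumes p: "p > 0" and q: "q > 0"
  shows "(p + j) * Beta (p + j) q * incbeta_coeff p q j = p * Beta p q"
proof -
  have not_nonpos: "x \<notin> \<int>\<^sub>\<le>\<^sub>0" if "x > 0" for x :: real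
    using that nonpos_Ints_nonpos by force
  have "pochhammer (p + q) j = Gamma (p + q + j) / Gamma (p + q)"
    using p q by (intro pochhammer_Gamma not_nonpos) simp
  moreover have "pochhammer (p + 1) j = (p + j) * Gamma (p + j) / (p * Gamma p)"
    using p Gamma_plus1[OF not_nonpos[of "p + j"]] Gamma_plus1[OF not_nonpos[OF p]]
    by (simp add: pochhammer_Gamma not_nonpos add_ac)
  ultimately have coeff: "incbeta_coeff p q j =
      Gamma (p + q + j) / Gamma (p + q) * (p * Gamma p) / ((p + j) * Gamma (p + j))"
    unfolding incbeta_coeff_def by simp
  have "Gamma (p + j) \<noteq> 0" "Gamma (p + q) \<noteq> 0" "Gamma (p + q + j) \<noteq> 0" "p + j \<noteq> 0"
    using p q by (simp_all add: Gamma_real_pos[THEN less_imp_neq, symmetric])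
  moreover have "s * (G * c / H) * (H / d * e / (s * G)) = e * c / d"
    if "s \<noteq> 0" "G \<noteq> 0" "H \<noteq> 0" "d \<noteq> 0" for s G H c d e :: real
    using that by (simp add: field_simps)
  ultimately show ?thesis
    unfolding Beta_def coeff by (simp add: add_ac)
qed

lemma infsum_eq_suminf_nonneg:
  fixes f :: "nat \<Rightarrow> real"
  assumes "summable f" and "\<And>n. f n \<ge> 0"
  shows "infsum f UNIV = suminf f"
  using assms by (intro infsumI sums_nonneg_imp_has_sum) (simp_all add: summable_sums)

lemma suminf_swap_nonneg:
  fixes u :: "nat \<Rightarrow> nat \<Rightarrow> real"
  assumes nonneg: "\<And>j k. u j k \<ge> 0" and rows: "\<And>j. summable (u j)"
    and row_sums: "summable (\<lambda>j. \<Sum>k. u j k)"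
  shows "summable (\<lambda>k. \<Sum>j. u j k) \<and> (\<Sum>j. \<Sum>k. u j k) = (\<Sum>k. \<Sum>j. u j k)"
proof -
  have "((\<lambda>k. u j k) has_sum (\<Sum>k. u j k)) UNIV" for j
    using rows nonneg by (intro sums_nonneg_imp_has_sum) (simp_all add: summable_sums)
  moreover have "(\<lambda>j. \<Sum>k. u j k) summable_on UNIV"
    using row_sums nonneg by (intro summable_nonneg_imp_summable_on suminf_nonneg rows)
  ultimately have "(\<lambda>(j, k). u j k) summable_on UNIV \<times> UNIV"
    by (intro summable_on_SigmaI[where g = "\<lambda>j. \<Sum>k. u j k"]) (use nonneg in auto)
  then have swapped: "(\<lambda>(k, j). u j k) summable_on UNIV \<times> UNIV"
    by (subst (asm) summable_on_swap) simp
  have cols: "summable (\<lambda>j. u j k)" for k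
    using summable_on_SigmaD1[OF swapped, of k] by (simp add: summable_on_imp_summable)
  have col_infsum: "infsum (\<lambda>j. u j k) UNIV = (\<Sum>j. u j k)" for k
    by (rule infsum_eq_suminf_nonneg[OF cols nonneg])
  have row_infsum: "infsum (u j) UNIV = (\<Sum>k. u j k)" for j
    by (rule infsum_eq_suminf_nonneg[OF rows nonneg])
  have col_sums_nonneg: "(\<Sum>j. u j k) \<ge> 0" for k by (intro suminf_nonneg cols nonneg)
  have "(\<lambda>k. infsum (\<lambda>j. u j k) UNIV) summable_on UNIV"
    using summable_on_SigmaD[OF swapped[unfolded case_prod_unfold]] cols summable_on_SigmaD1[OF swapped]
    by simp
  then have col_sums: "summable (\<lambda>k. \<Sum>j. u j k)"
    unfolding col_infsum by (rule summable_on_imp_summable)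
  have "infsum (\<lambda>j. infsum (u j) UNIV) UNIV = infsum (\<lambda>k. infsum (\<lambda>j. u j k) UNIV) UNIV"
    using infsum_swap_banach[OF \<open>(\<lambda>(j, k). u j k) summable_on UNIV \<times> UNIV\<close>] by simp
  then show ?thesis
    unfolding row_infsum col_infsum
    using infsum_eq_suminf_nonneg[OF row_sums suminf_nonneg[OF rows nonneg]]
          infsum_eq_suminf_nonneg[OF col_sums col_sums_nonneg] col_sums
    by simp
qed

lemma summable_noncentral_beta_series:
  fixes p q x y :: real
  assumes "p > 0" and "q > 0" and "x \<ge> 0" and "0 \<le> y" and "y < 1"
  shows "summable (\<lambda>j. (x / 2) ^ j / fact j * inc_beta y (p + j) q)"
proof (rule summable_comparison_test[OF _ summable_exp[of "x / 2"]])
  have "norm ((x / 2) ^ j / fact j * inc_beta y (p + j) q) \<le> inverse (fact j) * (x / 2) ^ j" for j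
  proof -
    have ib: "0 \<le> inc_beta y (p + j) q \<and> inc_beta y (p + j) q \<le> 1"
      using assms by (intro inc_beta_nonneg_le_1) simp_all
    moreover have nn: "0 \<le> (x / 2) ^ j / fact j" using assms(3) by simp
    ultimately have "norm ((x / 2) ^ j / fact j * inc_beta y (p + j) q) =
        (x / 2) ^ j / fact j * inc_beta y (p + j) q"
      by (simp add: abs_mult assms(3))
    also have "\<dots> \<le> (x / 2) ^ j / fact j"
      by (rule mult_left_le[OF conjunct2[OF ib] nn])
    finally show ?thesis by (simp add: inverse_eq_divide)
  qed
  then show "\<exists>N. \<forall>j\<ge>N. norm ((x / 2) ^ j / fact j * inc_beta y (p + j) q) \<le>
      inverse (fact j) * (x / 2) ^ j"
    by (intro exI allI impI)
qed

lemma incbeta_coeff_kummer_coeff: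
  "incbeta_coeff p q k * kummer_coeff (p + q + k) (p + 1 + k) j = incbeta_coeff p q (k + j) / fact j"
  unfolding incbeta_coeff_def kummer_coeff_def pochhammer_product'[of "p + q" k j]
    pochhammer_product'[of "p + 1" k j]
  by (simp add: add_ac)

lemma sums_incbeta_coeff_kummerM:
  assumes "p > 0"
  shows "(\<lambda>j. z ^ j / fact j * incbeta_coeff p q (k + j)) sums
           (incbeta_coeff p q k * kummerM (p + q + k) (p + 1 + k) z)"
proof -
  have "(\<lambda>j. kummer_coeff (p + q + k) (p + 1 + k) j * z ^ j) sums kummerM (p + q + k) (p + 1 + k) z"
    unfolding kummerM_eq_suminf using assms by (intro summable_sums summable_kummer_coeff) simp
  from sums_mult[OF this, of "incbeta_coeff p q k"] show ?thesis
    by (simp only: mult.assoc[symmetric] incbeta_coeff_kummer_coeff) (simp add: field_simps)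
qed

lemma sums_incbeta_coeff_incbeta_series:
  assumes "p > 0" and "q > 0" and "\<bar>y\<bar> < 1"
  shows "(\<lambda>k. incbeta_coeff p q (j + k) * y ^ k) sums (incbeta_coeff p q j * incbeta_series (p + j) q y)"
proof -
  have "(\<lambda>k. incbeta_coeff (p + j) q k * y ^ k) sums incbeta_series (p + j) q y"
    unfolding incbeta_series_def using assms by (intro summable_sums summable_incbeta_series) simp_all
  from sums_mult[OF this, of "incbeta_coeff p q j"] show ?thesis
    by (simp add: mult_ac flip: incbeta_coeff_add)
qed

lemma noncentral_beta_term_eq:
  fixes p q x y :: real
  assumes p: "p > 0" and q: "q > 0" and y: "0 \<le> y" "y < 1"
  shows "(x / 2) ^ j / fact j * inc_beta y (p + j) q =
           y powr p * (1 - y) powr q / (p * Beta p q) *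
           ((x * y / 2) ^ j / fact j * incbeta_coeff p q j * incbeta_series (p + j) q y)"
proof -
  have "y powr (p + j) = y powr p * y ^ j"
    using y by (cases "y = 0") (simp_all add: powr_add powr_realpow)
  moreover have "(p + j) * Beta (p + j) q = p * Beta p q / incbeta_coeff p q j"
    using Beta_shift_incbeta_coeff[OF p q, of j] incbeta_coeff_pos[OF p q, of j] by (simp add: field_simps)
  ultimately have "inc_beta y (p + j) q =
      y powr p * y ^ j * (1 - y) powr q * incbeta_series (p + j) q y / (p * Beta p q / incbeta_coeff p q j)"
    using inc_beta_eq_incbeta_series[of "p + j" q y] p q y by simp
  also have "\<dots> = y powr p * (1 - y) powr q / (p * Beta p q) *
      (y ^ j * incbeta_coeff p q j * incbeta_series (p + j) q y)"
    using incbeta_coeff_pos[OF p q, of j] by (simp add: ac_simps)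
  finally show ?thesis by (simp add: power_mult_distrib power_divide ac_simps)
qed

lemma noncentral_beta_eq_kummer_series_pos:
  fixes p q x y :: real
  assumes p: "p > 0" and q: "q > 0" and x: "x \<ge> 0" and y: "0 < y" "y < 1"
  defines "z \<equiv> x * y / 2"
  shows "summable (\<lambda>k. y ^ k * incbeta_coeff p q k * kummerM (p + q + k) (p + 1 + k) z) \<and>
         noncentral_beta p q x y =
           exp (- x / 2) * y powr p * (1 - y) powr q / (p * Beta p q) *
           (\<Sum>k. y ^ k * incbeta_coeff p q k * kummerM (p + q + k) (p + 1 + k) z)"
proof -
  define C where "C = y powr p * (1 - y) powr q / (p * Beta p q)"
  define T where "T j = (x / 2) ^ j / fact j * inc_beta y (p + j) q" for j
  define u where "u j k = z ^ j / fact j * incbeta_coeff p q (j + k) * y ^ k" for j k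
  have "C > 0" unfolding C_def using p q y Beta_real_pos[OF p q] by simp
  have u_nonneg: "u j k \<ge> 0" for j k
    unfolding u_def z_def using x y incbeta_coeff_pos[OF p q, of "j + k"] by simp
  have row: "u j sums (z ^ j / fact j * incbeta_coeff p q j * incbeta_series (p + j) q y)" for j
    using sums_mult[OF sums_incbeta_coeff_incbeta_series[OF p q, of y j], of "z ^ j / fact j"] y
    unfolding u_def by (simp add: mult_ac)
  have T_eq: "T j = C * (\<Sum>k. u j k)" for j
    unfolding T_def C_def z_def noncentral_beta_term_eq[OF p q less_imp_le[OF y(1)] y(2)]
    using row[of j] by (simp add: sums_iff z_def)
  have "summable (\<lambda>j. T j / C)"
    unfolding T_def by (intro summable_divide summable_noncentral_beta_series p q x) (use y in auto)
  then have "summable (\<lambda>j. \<Sum>k. u j k)" using \<open>C > 0\<close> by (simp add: T_eq)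
  then have swap: "summable (\<lambda>k. \<Sum>j. u j k)" "(\<Sum>j. \<Sum>k. u j k) = (\<Sum>k. \<Sum>j. u j k)"
    using suminf_swap_nonneg[OF u_nonneg sums_summable[OF row]] by auto
  have col: "(\<Sum>j. u j k) = y ^ k * incbeta_coeff p q k * kummerM (p + q + k) (p + 1 + k) z" for k
    using sums_mult2[OF sums_incbeta_coeff_kummerM[OF p, of z q k], of "y ^ k"]
    unfolding u_def by (simp add: sums_iff mult_ac add.commute)
  have "noncentral_beta p q x y = exp (- x / 2) * (C * (\<Sum>j. \<Sum>k. u j k))"
    unfolding noncentral_beta_def T_def[symmetric] T_eq
    using suminf_mult[OF \<open>summable (\<lambda>j. \<Sum>k. u j k)\<close>, of C] by simp
  then show ?thesis
    using swap unfolding col C_def by (simp add: mult_ac)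
qed

lemma inc_beta_at_0: "inc_beta 0 a q = 0"
  unfolding inc_beta_def by simp

lemma noncentral_beta_eq_kummer_series:
  fixes p q x y :: real
  assumes p: "p > 0" and q: "q > 0" and x: "x \<ge> 0" and y: "0 \<le> y" "y < 1"
  defines "z \<equiv> x * y / 2"
  shows "summable (\<lambda>k. y ^ k * incbeta_coeff p q k * kummerM (p + q + k) (p + 1 + k) z) \<and>
         noncentral_beta p q x y =
           exp (- x / 2) * y powr p * (1 - y) powr q / (p * Beta p q) *
           (\<Sum>k. y ^ k * incbeta_coeff p q k * kummerM (p + q + k) (p + 1 + k) z)"
proof (cases "y = 0")
  case True
  have "summable (\<lambda>k. 0 ^ k * incbeta_coeff p q k * kummerM (p + q + k) (p + 1 + k) z)"
    using summable_0_powser[of "\<lambda>k. incbeta_coeff p q k * kummerM (p + q + k) (p + 1 + k) z"]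
    by (simp add: mult_ac)
  moreover have "noncentral_beta p q x 0 = 0"
    unfolding noncentral_beta_def inc_beta_at_0 by simp
  ultimately show ?thesis using True p by simp
next
  case False
  with y show ?thesis unfolding z_def by (intro noncentral_beta_eq_kummer_series_pos p q x) auto
qed

theorem mainTheorem9:
  fixes p q x y :: real
  assumes "p > 0" and "q > 0" and "x \<ge> 0" and "0 \<le> y" and "y < 1"
  defines "z \<equiv> x * y / 2"
  shows "summable (\<lambda>j. y ^ j * pochhammer (p + q) j / pochhammer (p + 1) j
                          * kummerM (p + q + real j) (p + 1 + real j) z) \<and>
         summable (\<lambda>j. y ^ j * pochhammer (p + q) j / pochhammer (p + 1) j
                          * kummerM (1 - q) (p + 1 + real j) (- z)) \<and>
         summable (\<lambda>j. y ^ j * (deriv ^^ j) (\<lambda>w. kummerM (p + q) (p + 1) w) z) \<and>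
         noncentral_beta p q x y =
           exp (- x / 2) * y powr p * (1 - y) powr q / (p * Beta p q) *
           (\<Sum>j. y ^ j * pochhammer (p + q) j / pochhammer (p + 1) j
                  * kummerM (p + q + real j) (p + 1 + real j) z) \<and>
         noncentral_beta p q x y =
           exp (x * (y - 1) / 2) * y powr p * (1 - y) powr q / (p * Beta p q) *
           (\<Sum>j. y ^ j * pochhammer (p + q) j / pochhammer (p + 1) j
                  * kummerM (1 - q) (p + 1 + real j) (- z)) \<and>
         noncentral_beta p q x y =
           exp (- x / 2) * y powr p * (1 - y) powr q / (p * Beta p q) *
           (\<Sum>j. y ^ j * (deriv ^^ j) (\<lambda>w. kummerM (p + q) (p + 1) w) z)"
proof -
  define s where "s j = y ^ j * pochhammer (p + q) j / pochhammer (p + 1) j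
                          * kummerM (p + q + real j) (p + 1 + real j) z" for j
  have series: "summable s" and noncentral:
      "noncentral_beta p q x y = exp (- x / 2) * y powr p * (1 - y) powr q / (p * Beta p q) * suminf s"
    using noncentral_beta_eq_kummer_series[OF assms(1-5)]
    unfolding s_def z_def incbeta_coeff_def by auto
  have transformed: "y ^ j * pochhammer (p + q) j / pochhammer (p + 1) j
                       * kummerM (1 - q) (p + 1 + real j) (- z) = exp (- z) * s j" for j
    using kummerM_transform[of "p + 1 + j" "p + q + j" z] assms(1)
    unfolding s_def by (simp add: exp_minus field_simps)
  have derivs: "y ^ j * (deriv ^^ j) (\<lambda>w. kummerM (p + q) (p + 1) w) z = s j" for j
    using higher_deriv_kummerM[of "p + 1" j "p + q"] assms(1) unfolding s_def by (simp add: add_ac)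
  have "exp (- x / 2) = exp (x * (y - 1) / 2) * exp (- z)"
    unfolding z_def exp_add[symmetric] by (simp add: field_simps)
  then show ?thesis
    unfolding transformed derivs s_def[symmetric]
    using series noncentral suminf_mult[OF series, of "exp (- z)"] summable_mult[OF series, of "exp (- z)"]
    by (simp add: mult_ac)
qed

end
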